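(* Let $\mathcal C$ be a linear $[n,k]$ MDS code over $F$ and let $L\in\mathbb Z^+$ satisfy $L\le\binom{n-1}{k-1}$. If $\mathcal C$ is strongly-$(\tau,L)$-list decodable (for some nonnegative $\tau\in\frac{1}{L+1}\mathbb Z$), then $\tau\le\frac{L(n-k)}{L+1}$.
   Context: $F=\mathrm{GF}(q)$; $\mathsf w(\cdot)$ denotes Hamming weight. For $L\in\mathbb Z^+$ and nonnegative $\tau\in\frac{1}{L+1}\mathbb Z$ (rationals of the form $b/(L+1)$, $b\in\mathbb Z$), a code $\mathcal C\subseteq F^n$ is strongly-$(\tau,L)$-list decodable if there do not exist $y\in F^n$ and $L+1$ distinct codewords $c_0,\dots,c_L\in\mathcal C$ with $\sum_{m=0}^{L}\mathsf w(y-c_m)\le(L+1)\tau$. *)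

theory Defs
  imports Complex_Main "HOL-Library.Function_Algebras"
begin

text \<open>Vectors of F^n are represented as functions nat => F that vanish outside {..<n}.
  F = GF(q) is an arbitrary finite field type.\<close>

definition fscale :: "'a::field \<Rightarrow> (nat \<Rightarrow> 'a) \<Rightarrow> (nat \<Rightarrow> 'a)" where
  "fscale c v = (\<lambda>i. c * v i)"

interpretation fvs: vector_space "fscale :: 'a::field \<Rightarrow> (nat \<Rightarrow> 'a) \<Rightarrow> (nat \<Rightarrow> 'a)"
  by unfold_locales (auto simp: fscale_def algebra_simps)

definition ambient :: "nat \<Rightarrow> (nat \<Rightarrow> 'a::zero) set" where
  "ambient n = {v. \<forall>i\<ge>n. v i = 0}"

definition hw :: "nat \<Rightarrow> (nat \<Rightarrow> 'a::zero) \<Rightarrow> nat" where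
  "hw n v = card {i. i < n \<and> v i \<noteq> 0}"

definition linear_code :: "nat \<Rightarrow> nat \<Rightarrow> (nat \<Rightarrow> 'a::field) set \<Rightarrow> bool" where
  "linear_code n k C \<longleftrightarrow> C \<subseteq> ambient n \<and> fvs.subspace C \<and> fvs.dim C = k"

definition min_dist :: "nat \<Rightarrow> (nat \<Rightarrow> 'a::ab_group_add) set \<Rightarrow> nat" where
  "min_dist n C = Min {hw n (c - c') | c c'. c \<in> C \<and> c' \<in> C \<and> c \<noteq> c'}"

definition MDS_code :: "nat \<Rightarrow> nat \<Rightarrow> (nat \<Rightarrow> 'a::field) set \<Rightarrow> bool" where
  "MDS_code n k C \<longleftrightarrow> linear_code n k C \<and> min_dist n C = n - k + 1"

text \<open>Strong (tau,L)-list decodability; tau is a nonnegative real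
  (the hypothesis tau in 1/(L+1) Z is stated separately).\<close>
definition strongly_list_decodable ::
  "nat \<Rightarrow> (nat \<Rightarrow> 'a::ab_group_add) set \<Rightarrow> real \<Rightarrow> nat \<Rightarrow> bool" where
  "strongly_list_decodable n C \<tau> L \<longleftrightarrow>
     \<not> (\<exists>y \<in> ambient n. \<exists>c :: nat \<Rightarrow> (nat \<Rightarrow> 'a).
          inj_on c {0..L} \<and> (\<forall>m\<in>{0..L}. c m \<in> C) \<and>
          real (\<Sum>m=0..L. hw n (y - c m)) \<le> real (L + 1) * \<tau>)"

end

theory Submission imports Defs "HOL-Library.FuncSet" begin

text \<open>Put y = e_{n-1}. For every (k-1)-subset S of the first n-1 coordinates the
  codewords vanishing on S form a subspace of dimension at least 1; since the minimum
  distance is n-k+1, a nonzero such codeword vanishes exactly on S, so after scaling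
  it has a 1 at position n-1 and lies at distance n-k from y. Choosing L distinct sets S
  (possible as L \<le> (n-1 choose k-1)) and adding the zero word, which is at distance 1
  from y, gives L+1 distinct codewords with total distance 1 + L(n-k) from y. Hence
  (L+1)\<tau> < 1 + L(n-k), and integrality of (L+1)\<tau> gives (L+1)\<tau> \<le> L(n-k).\<close>

lemma finite_ambient: "finite (ambient n :: (nat \<Rightarrow> 'a::{finite,zero}) set)"
proof -
  let ?ext = "\<lambda>f i. if i < n then f i else 0"
  have "ambient n \<subseteq> ?ext ` PiE {..<n} (\<lambda>_. (UNIV::'a set))"
  proof
    fix v :: "nat \<Rightarrow> 'a" assume "v \<in> ambient n"
    hence "v = ?ext (restrict v {..<n})"
      by (auto simp: ambient_def fun_eq_iff restrict_def)
    thus "v \<in> ?ext ` PiE {..<n} (\<lambda>_. UNIV)"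
      by (rule image_eqI[where x = "restrict v {..<n}"]) auto
  qed
  moreover have "finite (?ext ` PiE {..<n} (\<lambda>_. (UNIV::'a set)))"
    by (intro finite_imageI finite_PiE) auto
  ultimately show ?thesis by (rule finite_subset)
qed

lemma dim_le_dim_coord_zero_plus_one:
  assumes sub: "fvs.subspace V" and fin: "finite V"
  shows "fvs.dim V \<le> fvs.dim {v\<in>V. v i = (0::'a::field)} + 1"
proof (cases "\<forall>v\<in>V. v i = 0")
  case True
  hence "{v\<in>V. v i = 0} = V" by auto
  thus ?thesis by simp
next
  case False
  then obtain b where b: "b \<in> V" "b i \<noteq> 0" by auto
  define W where "W = {v\<in>V. v i = 0}"
  obtain B where B: "B \<subseteq> W" "W \<subseteq> fvs.span B" "card B = fvs.dim W"
    using fvs.basis_exists[of W] by metis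
  have finB: "finite B" using B(1) fin unfolding W_def by (auto intro: finite_subset)
  have "V \<subseteq> fvs.span (insert b B)"
  proof
    fix v assume v: "v \<in> V"
    define r where "r = v i / b i"
    have "v - fscale r b \<in> V"
      using sub v b(1) fvs.subspace_diff fvs.subspace_scale by blast
    moreover have "(v - fscale r b) i = 0" using b(2) by (simp add: r_def fscale_def)
    ultimately have "v - fscale r b \<in> W" by (simp add: W_def)
    hence "v - fscale r b \<in> fvs.span B" using B(2) by blast
    thus "v \<in> fvs.span (insert b B)" using fvs.span_breakdown_eq by blast
  qed
  hence "fvs.dim V \<le> card (insert b B)" using fvs.dim_le_card finB by blast
  also have "\<dots> \<le> card B + 1" by (simp add: card_insert_if finB)
  finally show ?thesis using B(3) W_def by simp
qed

definition vanishing_on :: "(nat \<Rightarrow> 'a::zero) set \<Rightarrow> nat set \<Rightarrow> (nat \<Rightarrow> 'a) set" where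
  "vanishing_on C S = {v\<in>C. \<forall>i\<in>S. v i = 0}"

lemma subspace_vanishing_on:
  assumes "fvs.subspace C"
  shows "fvs.subspace (vanishing_on C S)"
  using assms unfolding fvs.subspace_def vanishing_on_def by (auto simp: fscale_def)

lemma dim_le_dim_vanishing_on_plus_card:
  assumes "finite S" "fvs.subspace C" "finite C"
  shows "fvs.dim C \<le> fvs.dim (vanishing_on C S) + card S"
  using assms(1)
proof (induction S rule: finite_induct)
  case empty
  then show ?case by (simp add: vanishing_on_def)
next
  case (insert j S)
  have "vanishing_on C (insert j S) = {v\<in>vanishing_on C S. v j = 0}"
    by (auto simp: vanishing_on_def)
  moreover have "finite (vanishing_on C S)" using assms(3) by (simp add: vanishing_on_def)
  ultimately have "fvs.dim (vanishing_on C S) \<le> fvs.dim (vanishing_on C (insert j S)) + 1"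
    using dim_le_dim_coord_zero_plus_one[OF subspace_vanishing_on[OF assms(2)]] by simp
  thus ?case using insert by simp
qed

lemma MDS_weight_ge:
  fixes C :: "(nat \<Rightarrow> 'a::{finite,field}) set"
  assumes mds: "MDS_code n k C" and v: "v \<in> C" "v \<noteq> 0"
  shows "n - k + 1 \<le> hw n v"
proof -
  have lc: "C \<subseteq> ambient n" "fvs.subspace C"
    using mds by (auto simp: MDS_code_def linear_code_def)
  have finC: "finite C" using lc(1) finite_ambient by (rule finite_subset)
  have zero: "0 \<in> C" using lc(2) by (rule fvs.subspace_0)
  define D where "D = {hw n (c - c') | c c'. c \<in> C \<and> c' \<in> C \<and> c \<noteq> c'}"
  have "D \<subseteq> (\<lambda>(c,c'). hw n (c - c')) ` (C \<times> C)" unfolding D_def by auto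
  hence "finite D" by (rule finite_subset) (simp add: finC)
  moreover have "hw n (v - 0) \<in> D" unfolding D_def using v zero by blast
  ultimately have "Min D \<le> hw n v" by simp
  thus ?thesis using mds by (simp add: MDS_code_def min_dist_def D_def)
qed

lemma MDS_codeword_with_zero_set:
  fixes C :: "(nat \<Rightarrow> 'a::{finite,field}) set"
  assumes mds: "MDS_code n k C" and k: "1 \<le> k" "k \<le> n"
    and S: "S \<subseteq> {..<n}" "card S = k - 1" and p: "p < n" "p \<notin> S"
  shows "\<exists>v\<in>C. v p = 1 \<and> {i. i < n \<and> v i = 0} = S"
proof -
  have lc: "C \<subseteq> ambient n" "fvs.subspace C" "fvs.dim C = k"
    using mds by (auto simp: MDS_code_def linear_code_def)
  have finS: "finite S" using S(1) finite_subset by blast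
  have "finite C" using lc(1) finite_ambient finite_subset by blast
  hence "k \<le> fvs.dim (vanishing_on C S) + (k - 1)"
    using dim_le_dim_vanishing_on_plus_card[OF finS lc(2)] lc(3) S(2) by simp
  hence "fvs.dim (vanishing_on C S) \<noteq> 0" using k by linarith
  hence "\<not> vanishing_on C S \<subseteq> fvs.span {}"
    using fvs.dim_le_card[of "vanishing_on C S" "{}"] by auto
  then obtain v where v: "v \<in> C" "\<forall>i\<in>S. v i = 0" "v \<noteq> 0"
    by (auto simp: vanishing_on_def fvs.span_empty)
  define supp where "supp = {i. i < n \<and> v i \<noteq> 0}"
  have "card ({..<n} - S) = n - (k - 1)"
    using S finS by (simp add: card_Diff_subset)
  also have "\<dots> \<le> card supp"
    using MDS_weight_ge[OF mds v(1,3)] k by (simp add: hw_def supp_def)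
  finally have "supp = {..<n} - S"
    using v(2) by (intro card_seteq) (auto simp: supp_def)
  hence zeros: "{i. i < n \<and> v i = 0} = S" using S(1) by (auto simp: supp_def)
  have "v p \<noteq> 0" using zeros p by blast
  define w where "w = fscale (1 / v p) v"
  have "w \<in> C" using lc(2) v(1) fvs.subspace_scale unfolding w_def by blast
  moreover have "w p = 1" using \<open>v p \<noteq> 0\<close> by (simp add: w_def fscale_def)
  moreover have "{i. i < n \<and> w i = 0} = S"
    using zeros \<open>v p \<noteq> 0\<close> by (simp add: w_def fscale_def)
  ultimately show ?thesis by blast
qed

definition unit_vec :: "nat \<Rightarrow> nat \<Rightarrow> 'a::{zero,one}" where
  "unit_vec p = (\<lambda>i. if i = p then 1 else 0)"

lemma hw_unit_vec_minus:
  fixes v :: "nat \<Rightarrow> 'a::ring_1"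
  assumes "v p = 1" "p < n" "{i. i < n \<and> v i = 0} = S"
  shows "hw n (unit_vec p - v) = n - card S - 1"
proof -
  have "{i. i < n \<and> (unit_vec p - v) i \<noteq> 0} = {..<n} - S - {p}"
    using assms by (auto simp: unit_vec_def)
  moreover have "finite S" "S \<subseteq> {..<n}" "p \<in> {..<n} - S" using assms by auto
  ultimately show ?thesis by (simp add: hw_def card_Diff_subset)
qed

lemma MDS_codewords_with_distinct_zero_sets:
  fixes C :: "(nat \<Rightarrow> 'a::{finite,field}) set"
  assumes mds: "MDS_code n k C" and k: "1 \<le> k" "k \<le> n"
    and L: "L \<le> (n - 1) choose (k - 1)"
  shows "\<exists>c. inj_on c {1..L} \<and>
           (\<forall>m\<in>{1..L}. c m \<in> C \<and> c m (n - 1) = 1 \<and> card {i. i < n \<and> c m i = 0} = k - 1)"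
proof -
  define p where "p = n - 1"
  have p: "p < n" using k by (simp add: p_def)
  define T where "T = {S. S \<subseteq> {..<p} \<and> card S = k - 1}"
  have "card T = (n - 1) choose (k - 1)"
    unfolding T_def p_def using n_subsets[of "{..<n-1}" "k-1"] by simp
  moreover have "finite T" unfolding T_def by (rule finite_subset[of _ "Pow {..<p}"]) auto
  ultimately obtain Sel where Sel: "Sel ` {1..L} \<subseteq> T" "inj_on Sel {1..L}"
    using card_le_inj[of "{1..L}" T] L by auto
  have "\<exists>v\<in>C. v p = 1 \<and> {i. i < n \<and> v i = 0} = S" if "S \<in> T" for S
  proof -
    have "S \<subseteq> {..<n}" "card S = k - 1" "p \<notin> S" using that p by (auto simp: T_def)
    thus ?thesis using MDS_codeword_with_zero_set[OF mds k _ _ p(1)] by blast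
  qed
  then obtain cw where cw: "\<And>S. S \<in> T \<Longrightarrow> cw S \<in> C \<and> cw S p = 1 \<and> {i. i < n \<and> cw S i = 0} = S"
    by (metis (no_types))
  have cw_Sel: "cw (Sel m) \<in> C" "cw (Sel m) p = 1" "{i. i < n \<and> cw (Sel m) i = 0} = Sel m"
    "card (Sel m) = k - 1" if "m \<in> {1..L}" for m
  proof -
    have "Sel m \<in> T" using Sel(1) that by blast
    thus "cw (Sel m) \<in> C" "cw (Sel m) p = 1" "{i. i < n \<and> cw (Sel m) i = 0} = Sel m"
      using cw by blast+
    show "card (Sel m) = k - 1" using \<open>Sel m \<in> T\<close> by (simp add: T_def)
  qed
  have "inj_on (cw \<circ> Sel) {1..L}"
  proof (rule inj_onI)
    fix a a' assume a: "a \<in> {1..L}" "a' \<in> {1..L}" and eq: "(cw \<circ> Sel) a = (cw \<circ> Sel) a'"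
    have "Sel a = {i. i < n \<and> cw (Sel a) i = 0}" using cw_Sel(3)[OF a(1)] by simp
    also have "\<dots> = Sel a'" using eq cw_Sel(3)[OF a(2)] by simp
    finally show "a = a'" using Sel(2) a by (simp add: inj_on_eq_iff)
  qed
  moreover have "\<forall>m\<in>{1..L}. (cw \<circ> Sel) m \<in> C \<and> (cw \<circ> Sel) m p = 1 \<and>
      card {i. i < n \<and> (cw \<circ> Sel) m i = 0} = k - 1"
    using cw_Sel by simp
  ultimately show ?thesis unfolding p_def by blast
qed

lemma MDS_list_near_unit_vec:
  fixes C :: "(nat \<Rightarrow> 'a::{finite,field}) set"
  assumes mds: "MDS_code n k C" and k: "1 \<le> k" "k \<le> n"
    and L: "L \<le> (n - 1) choose (k - 1)"
  shows "\<exists>c. inj_on c {0..L} \<and> (\<forall>m\<in>{0..L}. c m \<in> C) \<and>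
           (\<Sum>m=0..L. hw n (unit_vec (n - 1) - c m)) = 1 + L * (n - k)"
proof -
  obtain c' where c': "inj_on c' {1..L}"
    and cm: "\<And>m. m \<in> {1..L} \<Longrightarrow>
      c' m \<in> C \<and> c' m (n - 1) = 1 \<and> card {i. i < n \<and> c' m i = 0} = k - 1"
    using MDS_codewords_with_distinct_zero_sets[OF assms] by blast
  define c where "c m = (if m = 0 then 0 else c' m)" for m
  have p: "n - 1 < n" using k by simp
  have "0 \<in> C" using mds fvs.subspace_0 by (auto simp: MDS_code_def linear_code_def)
  hence C: "\<forall>m\<in>{0..L}. c m \<in> C" using cm by (auto simp: c_def)
  have "inj_on c {1..L}" using c' by (rule inj_on_cong[THEN iffD1, rotated]) (simp add: c_def)
  moreover have "c 0 \<notin> c ` {1..L}"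
  proof
    assume "c 0 \<in> c ` {1..L}"
    then obtain m where m: "m \<in> {1..L}" and "c' m = 0" by (auto simp: c_def)
    thus False using cm[OF m] by simp
  qed
  moreover have "{0..L} = insert 0 {1..L}" by auto
  ultimately have inj: "inj_on c {0..L}" by simp
  have "hw n (unit_vec (n - 1) - c 0) = 1"
  proof -
    have "{i. i < n \<and> (unit_vec (n - 1) - c 0) i \<noteq> 0} = {n - 1}"
      using p by (auto simp: unit_vec_def c_def)
    thus ?thesis by (simp add: hw_def)
  qed
  moreover have "hw n (unit_vec (n - 1) - c m) = n - k" if m: "m \<in> {1..L}" for m
  proof -
    have "c m = c' m" using m by (simp add: c_def)
    moreover have "hw n (unit_vec (n - 1) - c' m) = n - card {i. i < n \<and> c' m i = 0} - 1"
      using cm[OF m] p by (intro hw_unit_vec_minus) auto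
    ultimately show ?thesis using cm[OF m] k by simp
  qed
  ultimately have "(\<Sum>m=0..L. hw n (unit_vec (n - 1) - c m)) = 1 + L * (n - k)"
    by (simp add: sum.atLeast_Suc_atMost)
  thus ?thesis using inj C by blast
qed

lemma le_of_lt_succ_scaled:
  fixes \<tau> :: real and b :: int and N d :: nat
  assumes "d > 0" "\<tau> = real_of_int b / real d" "real d * \<tau> < real N + 1"
  shows "\<tau> \<le> real N / real d"
proof -
  have "real_of_int b < real_of_int (int N + 1)" using assms by simp
  hence "b \<le> int N" by linarith
  hence "real_of_int b \<le> real N" by (metis of_int_le_iff of_int_of_nat_eq)
  thus ?thesis using assms(1,2) by (simp add: divide_right_mono)
qed

theorem mainTheorem7:
  fixes C :: "(nat \<Rightarrow> 'a::{finite,field}) set"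
    and n k L :: nat and \<tau> :: real
  assumes "MDS_code n k C"
    and "1 \<le> k" and "k \<le> n"
    and "L \<ge> 1"
    and "L \<le> (n - 1) choose (k - 1)"
    and "\<tau> \<ge> 0"
    and "\<exists>b::int. \<tau> = real_of_int b / real (L + 1)"
    and "strongly_list_decodable n C \<tau> L"
  shows "\<tau> \<le> real (L * (n - k)) / real (L + 1)"
proof -
  obtain c where c: "inj_on c {0..L}" "\<forall>m\<in>{0..L}. c m \<in> C"
    and sum: "(\<Sum>m=0..L. hw n (unit_vec (n - 1) - c m)) = 1 + L * (n - k)"
    using MDS_list_near_unit_vec[OF assms(1-3,5)] by blast
  have "unit_vec (n - 1) \<in> ambient n"
    using assms(2,3) by (auto simp: ambient_def unit_vec_def)
  hence "\<not> real (\<Sum>m=0..L. hw n (unit_vec (n - 1) - c m)) \<le> real (L + 1) * \<tau>"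
    using assms(8) c unfolding strongly_list_decodable_def by blast
  hence "real (L + 1) * \<tau> < real (L * (n - k)) + 1" unfolding sum by simp
  moreover obtain b :: int where "\<tau> = real_of_int b / real (L + 1)" using assms(7) by blast
  ultimately show ?thesis by (intro le_of_lt_succ_scaled) auto
qed

end
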